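(* Suppose the neighbor graph $\mathbb N$ (no self-arcs, $m\ge2$ vertices) is strongly connected and $\chi(\mathbb N)\le n$, where $\chi(\mathbb N)=\min_{\mathrm D}\max_{\mathbb E\in\mathrm D} l(\mathbb E)$, the minimum being over all ear decompositions $\mathrm D$ of $\mathbb N$ and $l(\mathbb E)$ the number of arcs in ear $\mathbb E$. Then there exist matrices $C_{ji}$ (one per arc, each with $n$ columns) with $\ker C_{ji}\ne 0$ for every arc $(j,i)$ such that $\bar{\mathbb N}$ is well-configured.
   Context: Setup: $m$ agents labeled $1,\dots,m$ with states $x_i\in\mathbb R^n$; neighbor graph $\mathbb N$ is a directed graph on $\{1,\dots,m\}$ without self-arcs; each arc $(j,i)$ carries a real matrix $C_{ji}$ with $n$ columns; $\bar{\mathbb N}$ denotes $\mathbb N$ with these matrices. $\bar{\mathbb N}$ is well-configured if for all $x_1,\dots,x_m\in\mathbb R^n$, $C_{ji}x_i=C_{ji}x_j$ for every arc $(j,i)$ implies $x_1=\cdots=x_m$. A directed path is a subgraph with distinct vertices $v_0,\dots,v_k$ ($k\ge1$) and arcs $(v_{r-1},v_r)$; its end-vertices are $v_0,v_k$. A directed cycle is a subgraph with distinct vertices $v_1,\dots,v_k$ ($k\ge 2$) and arcs $(v_r,v_{r+1})$, $r<k$, and $(v_k,v_1)$. An ear decomposition of a directed graph $\mathbb G$ is a sequence of subgraphs $\mathbb E_0,\dots,\mathbb E_p$ such that $\mathbb E_0$ is a directed cycle, each $\mathbb E_i$ ($i\ge1$) is a directed path or directed cycle, the $\mathbb E_i$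 are pairwise arc-disjoint with union $\mathbb G$, and for $i\ge1$: a cycle $\mathbb E_i$ has exactly one vertex in common with $\bigcup_{k<i}\mathbb E_k$, and a path $\mathbb E_i$ has its two end-vertices as the only vertices in common with $\bigcup_{k<i}\mathbb E_k$. A strongly connected graph with at least two vertices has at least one ear decomposition. *)

theory Defs
  imports "Jordan_Normal_Form.Matrix_Kernel"
begin

(* A directed graph on vertex set V is given by its arc set E :: (nat \<times> nat) set,
   an arc (j,i) going from j to i. *)

definition strongly_connected :: "nat set \<Rightarrow> (nat \<times> nat) set \<Rightarrow> bool" where
  "strongly_connected V E \<longleftrightarrow> (\<forall>i\<in>V. \<forall>j\<in>V. (i, j) \<in> E\<^sup>*)"

(* An ear is a directed path or a directed cycle, given by the flag
   (True = cycle, False = path) and its list of distinct vertices. *)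
type_synonym ear = "bool \<times> nat list"

definition is_ear :: "ear \<Rightarrow> bool" where
  "is_ear e \<longleftrightarrow> distinct (snd e) \<and> length (snd e) \<ge> 2"

definition is_cycle :: "ear \<Rightarrow> bool" where
  "is_cycle e \<longleftrightarrow> fst e"

definition ear_verts :: "ear \<Rightarrow> nat set" where
  "ear_verts e = set (snd e)"

definition ear_arcs :: "ear \<Rightarrow> (nat \<times> nat) set" where
  "ear_arcs e = (if fst e then set (zip (snd e) (tl (snd e) @ [hd (snd e)]))
                 else set (zip (snd e) (tl (snd e))))"

definition ear_len :: "ear \<Rightarrow> nat" where
  "ear_len e = card (ear_arcs e)"

definition ear_decomposition :: "nat set \<Rightarrow> (nat \<times> nat) set \<Rightarrow> ear list \<Rightarrow> bool" where
  "ear_decomposition V E D \<longleftrightarrow>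
     D \<noteq> [] \<and> is_cycle (D ! 0) \<and> (\<forall>e\<in>set D. is_ear e) \<and>
     (\<forall>i<length D. \<forall>k<length D. i \<noteq> k \<longrightarrow> ear_arcs (D ! i) \<inter> ear_arcs (D ! k) = {}) \<and>
     (\<Union>e\<in>set D. ear_verts e) = V \<and> (\<Union>e\<in>set D. ear_arcs e) = E \<and>
     (\<forall>i. 1 \<le> i \<and> i < length D \<longrightarrow>
        (let prev = (\<Union>k<i. ear_verts (D ! k)) in
          (if is_cycle (D ! i) then card (ear_verts (D ! i) \<inter> prev) = 1
           else ear_verts (D ! i) \<inter> prev = {hd (snd (D ! i)), last (snd (D ! i))})))"

definition chi :: "nat set \<Rightarrow> (nat \<times> nat) set \<Rightarrow> nat" where
  "chi V E = Min {Max (ear_len ` set D) | D. ear_decomposition V E D}"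

definition well_configured :: "nat \<Rightarrow> nat set \<Rightarrow> (nat \<times> nat) set \<Rightarrow> (nat \<times> nat \<Rightarrow> real mat) \<Rightarrow> bool" where
  "well_configured n V E C \<longleftrightarrow>
     (\<forall>x :: nat \<Rightarrow> real vec. (\<forall>i\<in>V. x i \<in> carrier_vec n) \<longrightarrow>
        (\<forall>(j, i)\<in>E. C (j, i) *\<^sub>v x i = C (j, i) *\<^sub>v x j) \<longrightarrow>
        (\<forall>i\<in>V. \<forall>j\<in>V. x i = x j))"

end

theory Submission
  imports Defs
begin

text \<open>Take an ear decomposition all of whose ears have at most \<open>n\<close> arcs, and give the arc at
  position \<open>p\<close> (counted from \<open>0\<close>) along its ear the diagonal matrix that forgets coordinate
  \<open>p\<close>; its kernel contains the unit vector \<open>e\<^sub>p\<close>, which exists because \<open>p < n\<close>. If the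
  two ends of an ear carry the same state, coordinate \<open>p\<close> can change only across the arc at
  position \<open>p\<close>, and walking around the ear the other way shows that it does not change at all,
  so the whole ear carries one state. The first ear is a cycle and every later ear meets the
  earlier ones in one vertex (a cycle) or in both its ends (a path), so by induction all states
  agree. An ear decomposition exists by the greedy construction: as long as some arc is
  uncovered, strong connectivity yields an uncovered arc leaving a covered vertex, and a path
  from its head back to the covered vertices, with no covered interior vertex, closes it into
  a new ear.\<close>

definition drop_coord_mat :: "nat \<Rightarrow> nat \<Rightarrow> 'a :: comm_ring_1 mat" where
  "drop_coord_mat n p = mat n n (\<lambda>(r, c). if r = c \<and> r \<noteq> p then 1 else 0)"

lemma dim_drop_coord_mat [simp]:
  "dim_row (drop_coord_mat n p) = n" "dim_col (drop_coord_mat n p) = n"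
  by (simp_all add: drop_coord_mat_def)

lemma drop_coord_mat_mult_vec_nth:
  assumes "x \<in> carrier_vec n" "r < n"
  shows "(drop_coord_mat n p *\<^sub>v x) $ r = (if r = p then 0 else x $ r)"
proof -
  have "(drop_coord_mat n p *\<^sub>v x) $ r = (\<Sum>c<n. (if r = c \<and> r \<noteq> p then 1 else 0) * x $ c)"
    using assms by (simp add: drop_coord_mat_def scalar_prod_def lessThan_atLeast0)
  also have "\<dots> = (\<Sum>c<n. if c = r then (if r = p then 0 else x $ r) else 0)"
    by (rule sum.cong) auto
  finally show ?thesis
    using assms(2) by simp
qed

lemma drop_coord_mat_mult_vec_eqD:
  assumes "x \<in> carrier_vec n" "y \<in> carrier_vec n"
    and "drop_coord_mat n p *\<^sub>v x = drop_coord_mat n p *\<^sub>v y" "r < n" "r \<noteq> p"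
  shows "x $ r = y $ r"
  using drop_coord_mat_mult_vec_nth[OF assms(1,4), of p]
    drop_coord_mat_mult_vec_nth[OF assms(2,4), of p] assms(3,5)
  by simp

lemma mat_kernel_drop_coord_mat_nontrivial:
  assumes "p < n"
  shows "mat_kernel (drop_coord_mat n p :: 'a :: comm_ring_1 mat) \<noteq> {0\<^sub>v n}"
proof -
  have "drop_coord_mat n p *\<^sub>v unit_vec n p = (0\<^sub>v n :: 'a vec)"
    by (rule eq_vecI) (auto simp: drop_coord_mat_def assms)
  then have "unit_vec n p \<in> mat_kernel (drop_coord_mat n p :: 'a mat)"
    by (auto simp: mat_kernel_def)
  with unit_vec_nonzero[OF assms] show ?thesis
    by force
qed

lemma eq_by_Suc_steps:
  assumes "\<And>j. a \<le> j \<Longrightarrow> j < b \<Longrightarrow> f j = f (Suc j)" "a \<le> b"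
  shows "f a = f b"
  using assms(2,1) by (induction b rule: dec_induct) auto

lemma closed_chain_constant:
  fixes x :: "nat \<Rightarrow> 'a vec"
  assumes carrier: "\<And>k. k \<le> l \<Longrightarrow> x k \<in> carrier_vec n"
    and step: "\<And>k r. k < l \<Longrightarrow> r < n \<Longrightarrow> r \<noteq> k \<Longrightarrow> x k $ r = x (Suc k) $ r"
    and closed: "x l = x 0" and "k \<le> l"
  shows "x k = x 0"
proof (rule eq_vecI)
  show "dim_vec (x k) = dim_vec (x 0)"
    using carrier[OF \<open>k \<le> l\<close>] carrier[of 0] by simp
  fix r assume "r < dim_vec (x 0)"
  then have r: "r < n"
    using carrier[of 0] by simp
  show "x k $ r = x 0 $ r"
  proof (cases "k \<le> r")
    case True
    have "x 0 $ r = x k $ r"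
      by (rule eq_by_Suc_steps[of 0 k "\<lambda>j. x j $ r"]) (use True \<open>k \<le> l\<close> step r in auto)
    then show ?thesis by simp
  next
    case False
    have "x k $ r = x l $ r"
      by (rule eq_by_Suc_steps[of k l "\<lambda>j. x j $ r"]) (use False \<open>k \<le> l\<close> step r in auto)
    then show ?thesis
      using closed by simp
  qed
qed

definition walk_arcs :: "nat list \<Rightarrow> (nat \<times> nat) set" where
  "walk_arcs w = set (zip w (tl w))"

lemma walk_arcs_conv_nth: "walk_arcs w = {(w ! k, w ! Suc k) | k. Suc k < length w}"
  by (auto simp: walk_arcs_def set_zip nth_tl)

lemma walk_arcs_Nil [simp]: "walk_arcs [] = {}"
  and walk_arcs_singleton [simp]: "walk_arcs [v] = {}"
  by (simp_all add: walk_arcs_def)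

lemma walk_arcs_Cons: "w \<noteq> [] \<Longrightarrow> walk_arcs (v # w) = insert (v, hd w) (walk_arcs w)"
  by (cases w) (auto simp: walk_arcs_def)

lemma walk_arcs_append_subset: "walk_arcs ys \<subseteq> walk_arcs (xs @ ys)"
proof (induction xs)
  case (Cons x xs)
  then show ?case
    by (cases "xs @ ys = []") (auto simp: walk_arcs_Cons)
qed simp

lemma walk_arcs_source: "(u, v) \<in> walk_arcs w \<Longrightarrow> u \<in> set (butlast w)"
proof (induction w)
  case (Cons x w)
  then show ?case
    by (cases "w = []") (auto simp: walk_arcs_Cons)
qed simp

lemma walk_arcs_subset: "walk_arcs w \<subseteq> set w \<times> set w"
  by (auto simp: walk_arcs_conv_nth)

definition ear_walk :: "ear \<Rightarrow> nat list" where
  "ear_walk e = (if is_cycle e then snd e @ [hd (snd e)] else snd e)"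

lemma ear_arcs_eq_walk_arcs: "snd e \<noteq> [] \<Longrightarrow> ear_arcs e = walk_arcs (ear_walk e)"
  by (cases "snd e") (simp_all add: ear_arcs_def ear_walk_def walk_arcs_def is_cycle_def
      zip_append1[of "_ # _", simplified])

lemma set_ear_walk: "snd e \<noteq> [] \<Longrightarrow> set (ear_walk e) = ear_verts e"
  by (cases "snd e") (auto simp: ear_walk_def ear_verts_def)

lemma ear_walk_nth: "k < length (snd e) \<Longrightarrow> ear_walk e ! k = snd e ! k"
  by (simp add: ear_walk_def nth_append)

lemma length_ear_walk: "length (ear_walk e) = length (snd e) + (if is_cycle e then 1 else 0)"
  by (simp add: ear_walk_def)

lemma ear_walk_nth_0: "snd e \<noteq> [] \<Longrightarrow> ear_walk e ! 0 = hd (snd e)"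
  by (simp add: ear_walk_nth hd_conv_nth)

lemma last_ear_walk:
  "snd e \<noteq> [] \<Longrightarrow> last (ear_walk e) = (if is_cycle e then hd (snd e) else last (snd e))"
  by (simp add: ear_walk_def)

lemma ear_len_eq: "is_ear e \<Longrightarrow> ear_len e = length (ear_walk e) - 1"
  by (auto simp: ear_len_def ear_arcs_def ear_walk_def is_ear_def is_cycle_def
      distinct_card[OF distinct_zipI1])

lemma ear_verts_eq_Field: "is_ear e \<Longrightarrow> ear_verts e = Field (ear_arcs e)"
proof
  assume e: "is_ear e"
  then have ne: "snd e \<noteq> []"
    by (auto simp: is_ear_def)
  let ?w = "ear_walk e"
  show "ear_verts e \<subseteq> Field (ear_arcs e)"
  proof
    fix v assume "v \<in> ear_verts e"
    then obtain k where k: "k < length ?w" "v = ?w ! k"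
      by (auto simp: set_ear_walk[OF ne, symmetric] in_set_conv_nth)
    have "length ?w \<ge> 2"
      using e by (simp add: is_ear_def length_ear_walk)
    then have "(?w ! k, ?w ! Suc k) \<in> walk_arcs ?w \<or> (?w ! (k - 1), ?w ! k) \<in> walk_arcs ?w"
      unfolding walk_arcs_conv_nth using k(1)
      by (cases "Suc k < length ?w") (blast, auto intro!: exI[of _ "k - 1"])
    then show "v \<in> Field (ear_arcs e)"
      using k(2) by (auto simp: ear_arcs_eq_walk_arcs[OF ne] intro: FieldI1 FieldI2)
  qed
  show "Field (ear_arcs e) \<subseteq> ear_verts e"
    using walk_arcs_subset[of ?w] by (auto simp: Field_def ear_arcs_eq_walk_arcs[OF ne] set_ear_walk[OF ne])
qed

definition ear_attaches :: "nat set \<Rightarrow> ear \<Rightarrow> bool" where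
  "ear_attaches U e \<longleftrightarrow>
     (if is_cycle e then card (ear_verts e \<inter> U) = 1
      else ear_verts e \<inter> U = {hd (snd e), last (snd e)})"

lemma ear_decomposition_altdef:
  "ear_decomposition V E D \<longleftrightarrow>
     D \<noteq> [] \<and> is_cycle (D ! 0) \<and> (\<forall>e\<in>set D. is_ear e) \<and>
     (\<forall>i<length D. \<forall>k<length D. i \<noteq> k \<longrightarrow> ear_arcs (D ! i) \<inter> ear_arcs (D ! k) = {}) \<and>
     (\<Union>e\<in>set D. ear_verts e) = V \<and> (\<Union>e\<in>set D. ear_arcs e) = E \<and>
     (\<forall>i. 1 \<le> i \<and> i < length D \<longrightarrow> ear_attaches (\<Union>k<i. ear_verts (D ! k)) (D ! i))"
  by (simp add: ear_decomposition_def ear_attaches_def Let_def)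

lemma ear_decomposition_unique_ear:
  assumes "ear_decomposition V E D" "e \<in> set D" "e' \<in> set D"
    and "a \<in> ear_arcs e" "a \<in> ear_arcs e'"
  shows "e = e'"
proof -
  obtain i k where "i < length D" "D ! i = e" "k < length D" "D ! k = e'"
    using assms(2,3) by (auto simp: in_set_conv_nth)
  with assms(1,4,5) show ?thesis
    unfolding ear_decomposition_altdef by blast
qed

definition arc_position :: "ear list \<Rightarrow> nat \<times> nat \<Rightarrow> nat" where
  "arc_position D a =
     (SOME k. \<exists>e\<in>set D. Suc k < length (ear_walk e) \<and> a = (ear_walk e ! k, ear_walk e ! Suc k))"

lemma arc_position_ear_walk:
  assumes D: "ear_decomposition V E D" and e: "e \<in> set D" and k: "Suc k < length (ear_walk e)"
  shows "arc_position D (ear_walk e ! k, ear_walk e ! Suc k) = k"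
  unfolding arc_position_def
proof (rule someI2, use e k in blast)
  fix k' assume "\<exists>e'\<in>set D. Suc k' < length (ear_walk e') \<and>
      (ear_walk e ! k, ear_walk e ! Suc k) = (ear_walk e' ! k', ear_walk e' ! Suc k')"
  then obtain e' where e'D: "e' \<in> set D" and k': "Suc k' < length (ear_walk e')"
    and eq: "ear_walk e ! k = ear_walk e' ! k'" "ear_walk e ! Suc k = ear_walk e' ! Suc k'"
    by auto
  have ear: "is_ear e"
    using D e by (auto simp: ear_decomposition_altdef)
  then have ne: "snd e \<noteq> []"
    by (auto simp: is_ear_def)
  have ne': "snd e' \<noteq> []"
    using D e'D by (auto simp: ear_decomposition_altdef is_ear_def)
  have "(ear_walk e ! k, ear_walk e ! Suc k) \<in> ear_arcs e"
    using k by (auto simp: ear_arcs_eq_walk_arcs[OF ne] walk_arcs_conv_nth)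
  moreover have "(ear_walk e ! k, ear_walk e ! Suc k) \<in> ear_arcs e'"
    using k' eq by (auto simp: ear_arcs_eq_walk_arcs[OF ne'] walk_arcs_conv_nth)
  ultimately have "e' = e"
    using ear_decomposition_unique_ear[OF D e'D e] by simp
  have "k < length (snd e)" "k' < length (snd e)"
    using k k' \<open>e' = e\<close> by (auto simp: length_ear_walk split: if_splits)
  with eq(1) \<open>e' = e\<close> ear show "k' = k"
    by (simp add: ear_walk_nth nth_eq_iff_index_eq is_ear_def)
qed

lemma arc_position_less_ear_len:
  assumes D: "ear_decomposition V E D" and "a \<in> E"
  obtains e where "e \<in> set D" "arc_position D a < ear_len e"
proof -
  obtain e where e: "e \<in> set D" "a \<in> ear_arcs e"
    using D \<open>a \<in> E\<close> by (auto simp: ear_decomposition_altdef)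
  have ear: "is_ear e"
    using D e(1) by (auto simp: ear_decomposition_altdef)
  then have "snd e \<noteq> []"
    by (auto simp: is_ear_def)
  then obtain k where k: "Suc k < length (ear_walk e)" "a = (ear_walk e ! k, ear_walk e ! Suc k)"
    using e(2) by (auto simp: ear_arcs_eq_walk_arcs walk_arcs_conv_nth)
  have "arc_position D a < ear_len e"
    using arc_position_ear_walk[OF D e(1) k(1)] k ear_len_eq[OF ear] by simp
  with e(1) show thesis
    by (rule that)
qed

lemma ear_vertices_eq_if_ends_eq:
  fixes x :: "nat \<Rightarrow> 'a :: comm_ring_1 vec"
  assumes ear: "is_ear e"
    and carrier: "\<forall>v\<in>ear_verts e. x v \<in> carrier_vec n"
    and arcs: "\<And>k. Suc k < length (ear_walk e) \<Longrightarrow>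
      drop_coord_mat n k *\<^sub>v x (ear_walk e ! Suc k) = drop_coord_mat n k *\<^sub>v x (ear_walk e ! k)"
    and ends: "x (last (ear_walk e)) = x (hd (snd e))"
    and "v \<in> ear_verts e"
  shows "x v = x (hd (snd e))"
proof -
  have ne: "snd e \<noteq> []"
    using ear by (auto simp: is_ear_def)
  let ?w = "ear_walk e" and ?l = "length (ear_walk e) - 1"
  have len: "length ?w > 0"
    using ne by (simp add: length_ear_walk)
  obtain k where k: "k < length ?w" "v = ?w ! k"
    using \<open>v \<in> ear_verts e\<close> by (auto simp: set_ear_walk[OF ne, symmetric] in_set_conv_nth)
  have carrier_walk: "x (?w ! j) \<in> carrier_vec n" if "j \<le> ?l" for j
  proof -
    have "?w ! j \<in> ear_verts e"
      using that len by (simp add: set_ear_walk[OF ne, symmetric] less_Suc_eq_le [symmetric])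
    then show ?thesis
      using carrier by blast
  qed
  have "x (?w ! k) = x (?w ! 0)"
  proof (rule closed_chain_constant[where x = "\<lambda>j. x (?w ! j)" and l = ?l])
    show "x (?w ! j) $ r = x (?w ! Suc j) $ r" if "j < ?l" "r < n" "r \<noteq> j" for j r
      using drop_coord_mat_mult_vec_eqD[OF carrier_walk carrier_walk arcs[symmetric]] that by simp
    show "x (?w ! ?l) = x (?w ! 0)"
      using ends len ne by (simp add: last_conv_nth ear_walk_nth_0)
  qed (use carrier_walk k in auto)
  then show ?thesis
    using k ne by (simp add: ear_walk_nth_0)
qed

lemma ear_attaches_ends:
  assumes att: "ear_attaches U e" and ne: "snd e \<noteq> []" and const: "\<And>u. u \<in> U \<Longrightarrow> x u = c"
  obtains u where "u \<in> ear_verts e \<inter> U" "x (last (ear_walk e)) = x (hd (snd e))"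
proof (cases "is_cycle e")
  case True
  then have "card (ear_verts e \<inter> U) = 1"
    using att by (simp add: ear_attaches_def)
  then obtain u where "ear_verts e \<inter> U = {u}"
    by (rule card_1_singletonE)
  then show thesis
    using that True last_ear_walk[OF ne] by auto
next
  case False
  then have ends: "ear_verts e \<inter> U = {hd (snd e), last (snd e)}"
    using att by (simp add: ear_attaches_def)
  then have "x (last (ear_walk e)) = x (hd (snd e))"
    using const False last_ear_walk[OF ne] by auto
  with ends show thesis
    using that by blast
qed

lemma ear_decomposition_constant:
  assumes D: "ear_decomposition V E D"
    and ear_const: "\<And>e v. e \<in> set D \<Longrightarrow> x (last (ear_walk e)) = x (hd (snd e)) \<Longrightarrow>
      v \<in> ear_verts e \<Longrightarrow> x v = x (hd (snd e))"
    and "v \<in> V" "w \<in> V"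
  shows "x v = x w"
proof -
  have ears: "\<forall>e\<in>set D. is_ear e"
    using D by (simp add: ear_decomposition_altdef)
  define c where "c = x (hd (snd (D ! 0)))"
  have "\<forall>v\<in>ear_verts (D ! i). x v = c" if "i < length D" for i
    using that
  proof (induction i rule: less_induct)
    case (less i)
    let ?e = "D ! i" and ?prev = "\<Union>k<i. ear_verts (D ! k)"
    have e: "?e \<in> set D"
      using less.prems by simp
    have ne: "snd ?e \<noteq> []"
      using ears e by (auto simp: is_ear_def)
    show ?case
    proof (cases "i = 0")
      case True
      then have "is_cycle ?e"
        using D by (simp add: ear_decomposition_altdef)
      then have "x (last (ear_walk ?e)) = x (hd (snd ?e))"
        using last_ear_walk[OF ne] by simp
      then show ?thesis
        using ear_const[OF e] True c_def by blast
    next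
      case False
      then have att: "ear_attaches ?prev ?e"
        using D less.prems by (simp add: ear_decomposition_altdef)
      have prev: "\<And>v. v \<in> ?prev \<Longrightarrow> x v = c"
        using less.IH less.prems by auto
      obtain u where "u \<in> ear_verts ?e \<inter> ?prev"
        and ends: "x (last (ear_walk ?e)) = x (hd (snd ?e))"
        by (rule ear_attaches_ends[OF att ne prev])
      then show ?thesis
        using ear_const[OF e ends] prev by (metis IntD1 IntD2)
    qed
  qed
  moreover have "(\<Union>e\<in>set D. ear_verts e) = V"
    using D by (simp add: ear_decomposition_altdef)
  ultimately show ?thesis
    using \<open>v \<in> V\<close> \<open>w \<in> V\<close> by (fastforce simp: in_set_conv_nth)
qed

lemma well_configured_arc_position:
  assumes D: "ear_decomposition V E D"
  shows "well_configured n V E (\<lambda>a. drop_coord_mat n (arc_position D a))"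
  unfolding well_configured_def
proof (intro allI impI ballI)
  fix x :: "nat \<Rightarrow> real vec" and v w
  assume carrier: "\<forall>i\<in>V. x i \<in> carrier_vec n"
    and eqs: "\<forall>(j, i)\<in>E. drop_coord_mat n (arc_position D (j, i)) *\<^sub>v x i =
                         drop_coord_mat n (arc_position D (j, i)) *\<^sub>v x j"
    and "v \<in> V" "w \<in> V"
  have verts: "(\<Union>e\<in>set D. ear_verts e) = V" and arcs: "(\<Union>e\<in>set D. ear_arcs e) = E"
    using D by (simp_all add: ear_decomposition_altdef)
  show "x v = x w"
  proof (rule ear_decomposition_constant[OF D _ \<open>v \<in> V\<close> \<open>w \<in> V\<close>])
    fix e u
    assume e: "e \<in> set D" and ends: "x (last (ear_walk e)) = x (hd (snd e))" and u: "u \<in> ear_verts e"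
    show "x u = x (hd (snd e))"
    proof (rule ear_vertices_eq_if_ends_eq[where n = n, OF _ _ _ ends u])
      show ear: "is_ear e"
        using D e by (simp add: ear_decomposition_altdef)
      show "\<forall>v\<in>ear_verts e. x v \<in> carrier_vec n"
        using carrier verts e by blast
      fix k assume k: "Suc k < length (ear_walk e)"
      have "snd e \<noteq> []"
        using ear by (auto simp: is_ear_def)
      then have "(ear_walk e ! k, ear_walk e ! Suc k) \<in> ear_arcs e"
        using k by (auto simp: ear_arcs_eq_walk_arcs walk_arcs_conv_nth)
      then have "(ear_walk e ! k, ear_walk e ! Suc k) \<in> E"
        unfolding arcs[symmetric] using e by blast
      with eqs have "drop_coord_mat n (arc_position D (ear_walk e ! k, ear_walk e ! Suc k)) *\<^sub>v x (ear_walk e ! Suc k) =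
          drop_coord_mat n (arc_position D (ear_walk e ! k, ear_walk e ! Suc k)) *\<^sub>v x (ear_walk e ! k)"
        by auto
      then show "drop_coord_mat n k *\<^sub>v x (ear_walk e ! Suc k) = drop_coord_mat n k *\<^sub>v x (ear_walk e ! k)"
        by (simp only: arc_position_ear_walk[OF D e k])
    qed
  qed
qed

lemma well_configured_if_ear_decomposition:
  assumes D: "ear_decomposition V E D" and short: "\<forall>e\<in>set D. ear_len e \<le> n"
  shows "\<exists>C :: nat \<times> nat \<Rightarrow> real mat.
           (\<forall>a\<in>E. dim_col (C a) = n \<and> mat_kernel (C a) \<noteq> {0\<^sub>v n}) \<and> well_configured n V E C"
proof (intro exI[of _ "\<lambda>a. drop_coord_mat n (arc_position D a)"] conjI ballI)
  fix a assume "a \<in> E"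
  then obtain e where "e \<in> set D" "arc_position D a < ear_len e"
    using arc_position_less_ear_len[OF D] by blast
  with short have "arc_position D a < n"
    by (meson less_le_trans)
  then show "mat_kernel (drop_coord_mat n (arc_position D a) :: real mat) \<noteq> {0\<^sub>v n}"
    by (rule mat_kernel_drop_coord_mat_nontrivial)
qed (simp_all add: well_configured_arc_position[OF D])

lemma rtrancl_exit_arc:
  assumes "(u, z) \<in> E\<^sup>*" "u \<in> U" "z \<notin> U"
  obtains x y where "(x, y) \<in> E" "x \<in> U" "y \<notin> U"
  using assms by (induction rule: rtrancl_induct) auto

lemma rtrancl_imp_distinct_path_into:
  assumes "(b, u) \<in> E\<^sup>*" "u \<in> U" "b \<notin> U"
  shows "\<exists>ps. ps \<noteq> [] \<and> hd ps = b \<and> last ps \<in> U \<and> distinct ps \<and>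
           set (butlast ps) \<inter> U = {} \<and> walk_arcs ps \<subseteq> E"
  using assms(1,3)
proof (induction rule: converse_rtrancl_induct)
  case base
  then show ?case
    using assms(2) by simp
next
  case (step b c)
  show ?case
  proof (cases "c \<in> U")
    case True
    then show ?thesis
      using step.prems step.hyps(1) by (intro exI[of _ "[b, c]"]) (auto simp: walk_arcs_Cons)
  next
    case False
    then obtain ps where ps: "ps \<noteq> []" "hd ps = c" "last ps \<in> U" "distinct ps"
      "set (butlast ps) \<inter> U = {}" "walk_arcs ps \<subseteq> E"
      using step.IH by blast
    show ?thesis
    proof (cases "b \<in> set ps")
      case True
      then obtain xs ys where ps_eq: "ps = xs @ b # ys"
        by (meson split_list)
      have "walk_arcs (b # ys) \<subseteq> E"
        using ps(6) walk_arcs_append_subset[of "b # ys" xs] ps_eq by blast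
      moreover have "set (butlast (b # ys)) \<subseteq> set (butlast ps)"
        using ps_eq by (auto simp: butlast_append)
      ultimately show ?thesis
        using ps ps_eq by (intro exI[of _ "b # ys"]) auto
    next
      case False
      then show ?thesis
        using ps step.prems step.hyps(1)
        by (intro exI[of _ "b # ps"]) (auto simp: walk_arcs_Cons)
    qed
  qed
qed

lemma exists_attaching_ear:
  assumes a: "a \<in> U" and ab: "(a, b) \<in> E" and ba: "(b, a) \<in> E\<^sup>*" and "a \<noteq> b"
  obtains e where "is_ear e" "ear_attaches U e" "(a, b) \<in> ear_arcs e" "ear_arcs e \<subseteq> E"
    "ear_arcs e \<inter> U \<times> U \<subseteq> {(a, b)}" "U = {a} \<longrightarrow> is_cycle e"
proof (cases "b \<in> U")
  case True
  let ?e = "(False, [a, b])"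
  show thesis
    by (rule that[of ?e])
      (use True a ab \<open>a \<noteq> b\<close> in \<open>auto simp: is_ear_def is_cycle_def ear_attaches_def ear_verts_def ear_arcs_def\<close>)
next
  case False
  then obtain ps where ps: "ps \<noteq> []" "hd ps = b" "last ps \<in> U" "distinct ps"
      "set (butlast ps) \<inter> U = {}" "walk_arcs ps \<subseteq> E"
    using rtrancl_imp_distinct_path_into[OF ba a] by blast
  obtain ys z where ps_eq: "ps = ys @ [z]"
    using ps(1) by (cases ps rule: rev_exhaust) auto
  have ys: "ys \<noteq> []" "set ys \<inter> U = {}" "z \<in> U" "distinct ys" "z \<notin> set ys"
    using ps ps_eq False by auto
  have arcs: "walk_arcs (a # ps) = insert (a, b) (walk_arcs ps)"
    using ps(1,2) by (simp add: walk_arcs_Cons)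
  have "walk_arcs ps \<inter> U \<times> U = {}"
    using ps(5) walk_arcs_source by fastforce
  then have arcs_U: "walk_arcs (a # ps) \<inter> U \<times> U \<subseteq> {(a, b)}"
    unfolding arcs by blast
  have arcs_E: "walk_arcs (a # ps) \<subseteq> E"
    unfolding arcs using ab ps(6) by blast
  show thesis
  proof (cases "z = a")
    case True
    let ?e = "(True, a # ys)"
    have "ear_arcs ?e = walk_arcs (a # ps)"
      using True ps_eq by (simp add: ear_arcs_eq_walk_arcs ear_walk_def is_cycle_def)
    moreover have "ear_verts ?e \<inter> U = {a}"
      using ys a by (auto simp: ear_verts_def)
    ultimately show thesis
      using ys a arcs arcs_U arcs_E
      by (intro that[of ?e]) (auto simp: is_ear_def is_cycle_def ear_attaches_def Suc_le_eq)
  next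
    case False
    let ?e = "(False, a # ps)"
    have "ear_arcs ?e = walk_arcs (a # ps)"
      by (simp add: ear_arcs_eq_walk_arcs ear_walk_def is_cycle_def)
    moreover have "ear_verts ?e \<inter> U = {a, z}"
      using ys a ps_eq by (auto simp: ear_verts_def)
    ultimately show thesis
      using ys a arcs arcs_U arcs_E False ps ps_eq
      by (intro that[of ?e]) (auto simp: is_ear_def is_cycle_def ear_attaches_def)
  qed
qed

lemma ear_decomposition_single:
  "is_ear e \<Longrightarrow> is_cycle e \<Longrightarrow> ear_decomposition (ear_verts e) (ear_arcs e) [e]"
  by (simp add: ear_decomposition_altdef)

lemma ear_decomposition_snoc:
  assumes D: "ear_decomposition V E D" and e: "is_ear e" "ear_arcs e \<inter> E = {}" "ear_attaches V e"
  shows "ear_decomposition (V \<union> ear_verts e) (E \<union> ear_arcs e) (D @ [e])"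
proof -
  have nth_D: "(D @ [e]) ! k = D ! k" if "k < length D" for k
    using that by (simp add: nth_append)
  have arcs_D: "ear_arcs (D ! k) \<subseteq> E" if "k < length D" for k
    using D that by (auto simp: ear_decomposition_altdef)
  have "(!) D ` {..<length D} = set D"
    using nth_image[of "length D" D] by (simp add: lessThan_atLeast0)
  then have "(\<Union>k<length D. ear_verts (D ! k)) = (\<Union>e\<in>set D. ear_verts e)"
    by (metis image_image)
  also have "\<dots> = V"
    using D by (simp add: ear_decomposition_altdef)
  finally have verts_D: "(\<Union>k<length D. ear_verts (D ! k)) = V" .
  have "ear_arcs ((D @ [e]) ! i) \<inter> ear_arcs ((D @ [e]) ! k) = {}"
    if ik: "i < length (D @ [e])" "k < length (D @ [e])" "i \<noteq> k" for i k
  proof (cases "i < length D \<and> k < length D")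
    case True
    then show ?thesis
      using D ik(3) nth_D by (simp add: ear_decomposition_altdef)
  next
    case False
    then consider "i = length D" "k < length D" | "k = length D" "i < length D"
      using ik by (auto simp: less_Suc_eq)
    then show ?thesis
      using arcs_D e(2) nth_D by cases fastforce+
  qed
  moreover have "ear_attaches (\<Union>k<i. ear_verts ((D @ [e]) ! k)) ((D @ [e]) ! i)"
    if "1 \<le> i" "i < length (D @ [e])" for i
  proof (cases "i < length D")
    case True
    then show ?thesis
      using D that nth_D by (simp add: ear_decomposition_altdef)
  next
    case False
    with that have "i = length D"
      by simp
    then show ?thesis
      using e(3) nth_D verts_D by simp
  qed
  ultimately show ?thesis
    using D e(1) by (auto simp: ear_decomposition_altdef nth_append)
qed

lemma ear_decomposition_Field:
  assumes "ear_decomposition V E D"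
  shows "V = Field E"
proof -
  have "V = (\<Union>e\<in>set D. Field (ear_arcs e))"
    using assms ear_verts_eq_Field by (auto simp: ear_decomposition_altdef)
  also have "\<dots> = Field E"
    using assms by (auto simp: ear_decomposition_altdef Field_def)
  finally show ?thesis .
qed

lemma strongly_connected_imp_out_arc:
  assumes "strongly_connected V E" "u \<in> V" "t \<in> V" "u \<noteq> t"
  obtains c where "(u, c) \<in> E"
proof -
  have "(u, t) \<in> E\<^sup>*"
    using assms(1-3) by (simp add: strongly_connected_def)
  with assms(4) show thesis
    by (metis converse_rtranclE that)
qed

lemma strongly_connected_Field:
  assumes "strongly_connected V E" "E \<subseteq> V \<times> V" "v \<in> V" "w \<in> V" "v \<noteq> w"
  shows "Field E = V"
proof
  show "Field E \<subseteq> V"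
    using assms(2) by (auto simp: Field_def)
  show "V \<subseteq> Field E"
  proof
    fix u assume "u \<in> V"
    obtain t where "t \<in> V" "u \<noteq> t"
      using assms(3-5) by blast
    with \<open>u \<in> V\<close> obtain c where "(u, c) \<in> E"
      by (rule strongly_connected_imp_out_arc[OF assms(1)])
    then show "u \<in> Field E"
      by (rule FieldI1)
  qed
qed

lemma ear_decomposition_verts_nonempty:
  assumes "ear_decomposition V E D"
  shows "V \<noteq> {}"
proof -
  have D0: "D ! 0 \<in> set D" and "\<forall>e\<in>set D. is_ear e" and V: "V = (\<Union>e\<in>set D. ear_verts e)"
    using assms by (simp_all add: ear_decomposition_altdef)
  then have "snd (D ! 0) \<noteq> []"
    using bspec[OF _ D0] by (auto simp: is_ear_def)
  then have "hd (snd (D ! 0)) \<in> V"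
    unfolding V by (intro UN_I[OF D0]) (simp add: ear_verts_def)
  then show ?thesis
    by blast
qed

lemma exists_uncovered_arc_from:
  assumes sc: "strongly_connected V E" and "E \<subseteq> V \<times> V" "F \<subseteq> E" "F \<noteq> E"
    and "F \<subseteq> U \<times> U" "U \<subseteq> V" "U \<noteq> {}"
  obtains x y where "(x, y) \<in> E" "(x, y) \<notin> F" "x \<in> U"
proof -
  obtain p q where pq: "(p, q) \<in> E" "(p, q) \<notin> F"
    using assms(3,4) by auto
  obtain u where u: "u \<in> U"
    using assms(7) by blast
  show thesis
  proof (cases "p \<in> U")
    case True
    with pq show thesis
      by (rule that)
  next
    case False
    have "(u, p) \<in> E\<^sup>*"
      using sc u assms(2,6) pq(1) by (auto simp: strongly_connected_def)
    then obtain x y where "(x, y) \<in> E" "x \<in> U" "y \<notin> U"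
      by (rule rtrancl_exit_arc[OF _ u False])
    with assms(5) show thesis
      using that by blast
  qed
qed

lemma ear_decomposition_extends:
  assumes sc: "strongly_connected V E" and EV: "E \<subseteq> V \<times> V" and loopfree: "\<forall>i. (i, i) \<notin> E"
    and fin: "finite E" and D: "ear_decomposition U F D" and "F \<subseteq> E"
  shows "\<exists>D'. ear_decomposition (Field E) E D'"
  using D \<open>F \<subseteq> E\<close>
proof (induction "card (E - F)" arbitrary: U F D rule: less_induct)
  case less
  have U: "U = Field F"
    by (rule ear_decomposition_Field[OF less.prems(1)])
  show ?case
  proof (cases "F = E")
    case True
    then show ?thesis
      using less.prems(1) U by blast
  next
    case False
    have FU: "F \<subseteq> U \<times> U" and UV: "U \<subseteq> V"
      using U less.prems(2) EV by (auto simp: Field_def)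
    obtain x y where xy: "(x, y) \<in> E" "(x, y) \<notin> F" "x \<in> U"
      using exists_uncovered_arc_from[OF sc EV less.prems(2) False FU UV]
        ear_decomposition_verts_nonempty[OF less.prems(1)] by blast
    have "(y, x) \<in> E\<^sup>*" "x \<noteq> y"
      using sc EV xy(1) loopfree by (auto simp: strongly_connected_def)
    from exists_attaching_ear[OF xy(3,1) this]
    obtain e where e: "is_ear e" "ear_attaches U e" "(x, y) \<in> ear_arcs e" "ear_arcs e \<subseteq> E"
      "ear_arcs e \<inter> U \<times> U \<subseteq> {(x, y)}" "U = {x} \<longrightarrow> is_cycle e" .
    have "ear_arcs e \<inter> F = {}"
      using e(5) FU xy(2) by blast
    then have D': "ear_decomposition (U \<union> ear_verts e) (F \<union> ear_arcs e) (D @ [e])"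
      by (rule ear_decomposition_snoc[OF less.prems(1) e(1) _ e(2)])
    have "E - (F \<union> ear_arcs e) \<subset> E - F"
      using xy(1,2) e(3) by blast
    then have "card (E - (F \<union> ear_arcs e)) < card (E - F)"
      using fin by (intro psubset_card_mono) auto
    then show ?thesis
      using less.hyps D' e(4) less.prems(2) by blast
  qed
qed

lemma exists_ear_decomposition:
  assumes sc: "strongly_connected V E" and EV: "E \<subseteq> V \<times> V" and loopfree: "\<forall>i. (i, i) \<notin> E"
    and fin: "finite E" and vw: "v \<in> V" "w \<in> V" "v \<noteq> w"
  shows "\<exists>D. ear_decomposition V E D"
proof -
  obtain c where c: "(v, c) \<in> E"
    by (rule strongly_connected_imp_out_arc[OF sc vw])
  have "(c, v) \<in> E\<^sup>*" "v \<noteq> c"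
    using c sc EV vw(1) loopfree by (auto simp: strongly_connected_def)
  from exists_attaching_ear[of v "{v}", OF singletonI c this]
  obtain e where e: "is_ear e" "ear_attaches {v} e" "(v, c) \<in> ear_arcs e" "ear_arcs e \<subseteq> E"
    "ear_arcs e \<inter> {v} \<times> {v} \<subseteq> {(v, c)}" "{v} = {v} \<longrightarrow> is_cycle e" .
  have "ear_decomposition (ear_verts e) (ear_arcs e) [e]"
    using e(1,6) by (intro ear_decomposition_single) simp_all
  then obtain D where "ear_decomposition (Field E) E D"
    using ear_decomposition_extends[OF sc EV loopfree fin _ e(4)] by blast
  then show ?thesis
    unfolding strongly_connected_Field[OF sc EV vw] ..
qed

lemma chi_attained:
  assumes fin: "finite E" and "ear_decomposition V E D0"
  obtains D where "ear_decomposition V E D" "\<forall>e\<in>set D. ear_len e \<le> chi V E"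
proof -
  let ?S = "{Max (ear_len ` set D) | D. ear_decomposition V E D}"
  have "?S \<subseteq> {..card E}"
  proof
    fix s assume "s \<in> ?S"
    then obtain D where D: "ear_decomposition V E D" and s: "s = Max (ear_len ` set D)"
      by blast
    have "ear_len e \<le> card E" if "e \<in> set D" for e
      unfolding ear_len_def using D that fin by (intro card_mono) (auto simp: ear_decomposition_altdef)
    moreover have "set D \<noteq> {}"
      using D by (simp add: ear_decomposition_altdef)
    ultimately show "s \<in> {..card E}"
      unfolding s by simp
  qed
  then have "finite ?S"
    by (rule finite_subset) simp
  moreover have "?S \<noteq> {}"
    using assms(2) by auto
  ultimately have "chi V E \<in> ?S"
    unfolding chi_def by (rule Min_in)
  then obtain D where D: "ear_decomposition V E D" and chi: "chi V E = Max (ear_len ` set D)"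
    by blast
  have "ear_len e \<le> chi V E" if "e \<in> set D" for e
    unfolding chi using that by simp
  with D show thesis
    by (intro that) auto
qed

theorem corollary5:
  fixes m n :: nat and E :: "(nat \<times> nat) set"
  assumes "m \<ge> 2"
    and "E \<subseteq> {1..m} \<times> {1..m}"
    and "\<forall>i. (i, i) \<notin> E"
    and "strongly_connected {1..m} E"
    and "chi {1..m} E \<le> n"
  shows "\<exists>C :: nat \<times> nat \<Rightarrow> real mat.
           (\<forall>a\<in>E. dim_col (C a) = n \<and> mat_kernel (C a) \<noteq> {0\<^sub>v n}) \<and>
           well_configured n {1..m} E C"
proof -
  have fin: "finite E"
    using assms(2) by (rule finite_subset) simp
  have "\<exists>D. ear_decomposition {1..m} E D"
    by (rule exists_ear_decomposition[OF assms(4,2,3) fin, of 1 2]) (use assms(1) in auto)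
  then obtain D where D: "ear_decomposition {1..m} E D" "\<forall>e\<in>set D. ear_len e \<le> chi {1..m} E"
    using chi_attained[OF fin] by blast
  show ?thesis
    using D assms(5) by (intro well_configured_if_ear_decomposition[OF D(1)]) auto
qed

end
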